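(* Let $(E,\langle\cdot,\cdot\rangle,\rho,\circ)$ be a pre-Courant algebroid over $M$ and let $\omega\in\Gamma(\operatorname{Hom}(\wedge^2E,E))$. Define $e_1\,\tilde\circ\,e_2=e_1\circ e_2+\omega(e_1,e_2)$. Then $(E,\langle\cdot,\cdot\rangle,\rho,\tilde\circ)$ is a pre-Courant algebroid if and only if $\omega\in C^2_{\mathcal D}(E,\operatorname{Ker}(\rho))$.
   Context: A Courant vector bundle over a smooth manifold $M$ is a vector bundle $E\to M$ with a fibrewise nondegenerate symmetric bilinear form $\langle\cdot,\cdot\rangle$ and a bundle map $\rho:E\to TM$ such that $\rho\circ\rho^*=0$, where $\rho^*:T^*M\to E^*\cong E$ is the dual of $\rho$ followed by the identification $E^*\cong E$ via $\langle\cdot,\cdot\rangle$. A pre-Courant algebroid structure on it is an $\mathbb R$-bilinear operation $\circ$ on $\Gamma(E)$ such that for all $e_1,e_2,e_3\in\Gamma(E)$: (i) $\rho(e_1\circ e_2)=[\rho(e_1),\rho(e_2)]$; (ii) $\langle e_1\circ e_1,e_2\rangle=\frac12\rho(e_2)\langle e_1,e_1\rangle$; (iii) $\rho(e_1)\langle e_2,e_3\rangle=\langle e_1\circ e_2,e_3\rangle+\langle e_2,e_1\circ e_3\rangle$. Define $\mathcal D:C^\infty(M)\to\Gamma(E)$ by $\langle\mathcal Df,e\rangle=\rho(e)f$. $C^2_{\mathcal D}(E,\operatorname{Ker}(\rho))$ is the space of $C^\infty(M)$-bilinear maps $\phi:\Gamma(E)\times\Gamma(E)\to\Gamma(E)$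 such that (1) $\phi$ takes values in $\Gamma(\operatorname{Ker}\rho)$, (2) $\phi(\mathcal Df,e)=0$ for all $f\in C^\infty(M)$, $e\in\Gamma(E)$, (3) $(e_1,e_2,e_3)\mapsto\langle\phi(e_1,e_2),e_3\rangle$ is totally skew-symmetric. *)

theory Defs
  imports Main "HOL.Real_Vector_Spaces"
begin

text \<open>Algebraic (section-level) model of a Courant vector bundle E over M:
  'a plays the role of C^infinity(M) (a commutative real algebra),
  'e plays the role of Gamma(E) (a module over 'a via smul),
  vector fields are derivations of 'a, the Lie bracket is the commutator.\<close>

definition module_str :: "('a::{comm_ring_1,real_algebra_1} \<Rightarrow> 'e::ab_group_add \<Rightarrow> 'e) \<Rightarrow> bool" where
  "module_str smul \<longleftrightarrow>
     (\<forall>f x y. smul f (x + y) = smul f x + smul f y) \<and>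
     (\<forall>f h x. smul (f + h) x = smul f x + smul h x) \<and>
     (\<forall>f h x. smul (f * h) x = smul f (smul h x)) \<and>
     (\<forall>x. smul 1 x = x)"

definition derivation :: "('a::{comm_ring_1,real_algebra_1} \<Rightarrow> 'a) \<Rightarrow> bool" where
  "derivation X \<longleftrightarrow>
     (\<forall>f h. X (f + h) = X f + X h) \<and>
     (\<forall>f h. X (f * h) = f * X h + h * X f) \<and>
     (\<forall>c. X (of_real c) = 0)"

definition lie_bracket :: "('a \<Rightarrow> 'a::ring) \<Rightarrow> ('a \<Rightarrow> 'a) \<Rightarrow> ('a \<Rightarrow> 'a)" where
  "lie_bracket X Y = (\<lambda>f. X (Y f) - Y (X f))"

definition Dop :: "('e \<Rightarrow> 'e \<Rightarrow> 'a) \<Rightarrow> ('e \<Rightarrow> 'a \<Rightarrow> 'a) \<Rightarrow> 'a \<Rightarrow> 'e" where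
  "Dop g rho f = (THE d. \<forall>e. g d e = rho e f)"

definition courant_vb ::
  "('a::{comm_ring_1,real_algebra_1} \<Rightarrow> 'e::ab_group_add \<Rightarrow> 'e) \<Rightarrow> ('e \<Rightarrow> 'e \<Rightarrow> 'a) \<Rightarrow> ('e \<Rightarrow> 'a \<Rightarrow> 'a) \<Rightarrow> bool" where
  "courant_vb smul g rho \<longleftrightarrow>
     module_str smul \<and>
     (\<forall>x y. g x y = g y x) \<and>
     (\<forall>x y z. g (x + y) z = g x z + g y z) \<and>
     (\<forall>f x y. g (smul f x) y = f * g x y) \<and>
     (\<forall>x. (\<forall>y. g x y = 0) \<longrightarrow> x = 0) \<and>
     (\<forall>x y h. rho (x + y) h = rho x h + rho y h) \<and>
     (\<forall>f x h. rho (smul f x) h = f * rho x h) \<and>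
     (\<forall>x. derivation (rho x)) \<and>
     (\<forall>f. \<exists>d. \<forall>e. g d e = rho e f) \<and>
     (\<forall>f h. rho (Dop g rho f) h = 0)"

definition pre_courant ::
  "('a::{comm_ring_1,real_algebra_1} \<Rightarrow> 'e::ab_group_add \<Rightarrow> 'e) \<Rightarrow> ('e \<Rightarrow> 'e \<Rightarrow> 'a) \<Rightarrow> ('e \<Rightarrow> 'a \<Rightarrow> 'a)
    \<Rightarrow> ('e \<Rightarrow> 'e \<Rightarrow> 'e) \<Rightarrow> bool" where
  "pre_courant smul g rho circ \<longleftrightarrow>
     (\<forall>x y z. circ (x + y) z = circ x z + circ y z) \<and>
     (\<forall>x y z. circ x (y + z) = circ x y + circ x z) \<and>
     (\<forall>c x y. circ (smul (of_real c) x) y = smul (of_real c) (circ x y)) \<and>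
     (\<forall>c x y. circ x (smul (of_real c) y) = smul (of_real c) (circ x y)) \<and>
     (\<forall>x y. rho (circ x y) = lie_bracket (rho x) (rho y)) \<and>
     (\<forall>x y. g (circ x x) y = scaleR (1/2) (rho y (g x x))) \<and>
     (\<forall>x y z. rho x (g y z) = g (circ x y) z + g y (circ x z))"

definition hom_wedge2 :: "('a::{comm_ring_1,real_algebra_1} \<Rightarrow> 'e::ab_group_add \<Rightarrow> 'e) \<Rightarrow> ('e \<Rightarrow> 'e \<Rightarrow> 'e) \<Rightarrow> bool" where
  "hom_wedge2 smul \<omega> \<longleftrightarrow>
     (\<forall>x y z. \<omega> (x + y) z = \<omega> x z + \<omega> y z) \<and>
     (\<forall>x y z. \<omega> x (y + z) = \<omega> x y + \<omega> x z) \<and>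
     (\<forall>f x y. \<omega> (smul f x) y = smul f (\<omega> x y)) \<and>
     (\<forall>f x y. \<omega> x (smul f y) = smul f (\<omega> x y)) \<and>
     (\<forall>x y. \<omega> x y = - \<omega> y x)"

definition C2_D ::
  "('a::{comm_ring_1,real_algebra_1} \<Rightarrow> 'e::ab_group_add \<Rightarrow> 'e) \<Rightarrow> ('e \<Rightarrow> 'e \<Rightarrow> 'a) \<Rightarrow> ('e \<Rightarrow> 'a \<Rightarrow> 'a)
    \<Rightarrow> ('e \<Rightarrow> 'e \<Rightarrow> 'e) \<Rightarrow> bool" where
  "C2_D smul g rho \<phi> \<longleftrightarrow>
     (\<forall>x y z. \<phi> (x + y) z = \<phi> x z + \<phi> y z) \<and>
     (\<forall>x y z. \<phi> x (y + z) = \<phi> x y + \<phi> x z) \<and>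
     (\<forall>f x y. \<phi> (smul f x) y = smul f (\<phi> x y)) \<and>
     (\<forall>f x y. \<phi> x (smul f y) = smul f (\<phi> x y)) \<and>
     (\<forall>x y h. rho (\<phi> x y) h = 0) \<and>
     (\<forall>f e. \<phi> (Dop g rho f) e = 0) \<and>
     (\<forall>x y z. g (\<phi> x y) z = - g (\<phi> y x) z) \<and>
     (\<forall>x y z. g (\<phi> x y) z = - g (\<phi> x z) y)"

end

theory Submission
  imports Defs
begin

text \<open>Twisting by \<open>\<omega>\<close> leaves bilinearity untouched, and axiom (ii) survives because
  \<open>\<omega>(e,e) = 0\<close>.  Axiom (i) for the twisted bracket says exactly that \<open>\<omega>\<close> takes values in
  \<open>Ker \<rho>\<close>, and axiom (iii) that \<open>\<langle>\<omega>(e\<^sub>1,e\<^sub>2),e\<^sub>3\<rangle>\<close> is skew in its last two arguments; together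
  with the skew-symmetry of \<open>\<omega>\<close> this is total skew-symmetry.  The remaining condition
  \<open>\<omega>(\<D>f,e) = 0\<close> is then automatic: pairing with any \<open>z\<close> gives
  \<open>\<langle>\<omega>(\<D>f,e),z\<rangle> = \<langle>\<omega>(e,z),\<D>f\<rangle> = \<rho>(\<omega>(e,z)) f = 0\<close>.\<close>

lemma real_vector_eq_minus_self_iff:
  fixes a :: "'a::real_vector"
  shows "a = - a \<longleftrightarrow> a = 0"
proof
  assume "a = - a"
  then have "scaleR 2 a = 0"
    by (simp add: scaleR_2 eq_neg_iff_add_eq_0)
  then show "a = 0" by simp
qed simp

context
  fixes smul :: "'a::{comm_ring_1,real_algebra_1} \<Rightarrow> 'e::ab_group_add \<Rightarrow> 'e"
    and g :: "'e \<Rightarrow> 'e \<Rightarrow> 'a" and rho :: "'e \<Rightarrow> 'a \<Rightarrow> 'a"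
  assumes cvb: "courant_vb smul g rho"
begin

lemma courant_vb_sym: "g x y = g y x"
  using cvb unfolding courant_vb_def by blast

lemma courant_vb_add_left: "g (x + y) z = g x z + g y z"
  using cvb unfolding courant_vb_def by blast

lemma courant_vb_add_right: "g z (x + y) = g z x + g z y"
  by (simp add: courant_vb_sym[of z] courant_vb_add_left)

lemma courant_vb_minus_left: "g (- x) z = - g x z"
proof -
  interpret additive "\<lambda>x. g x z"
    by unfold_locales (rule courant_vb_add_left)
  show ?thesis by (rule minus)
qed

lemma courant_vb_diff_left: "g (x - y) z = g x z - g y z"
proof -
  interpret additive "\<lambda>x. g x z"
    by unfold_locales (rule courant_vb_add_left)
  show ?thesis by (rule diff)
qed

lemma courant_vb_nondegenerate: "(\<And>y. g x y = 0) \<Longrightarrow> x = 0"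
  using cvb unfolding courant_vb_def by blast

lemma courant_vb_anchor_add: "rho (x + y) h = rho x h + rho y h"
  using cvb unfolding courant_vb_def by blast

lemma courant_vb_Dop: "g (Dop g rho f) e = rho e f"
proof -
  obtain d where d: "\<forall>e. g d e = rho e f"
    using cvb unfolding courant_vb_def by meson
  have "\<forall>e. g (Dop g rho f) e = rho e f"
    unfolding Dop_def
  proof (rule theI[of _ d])
    fix d' assume d': "\<forall>e. g d' e = rho e f"
    have "d' - d = 0"
      by (rule courant_vb_nondegenerate) (simp add: courant_vb_diff_left d d')
    then show "d' = d" by simp
  qed (rule d)
  then show ?thesis by blast
qed

lemma hom_wedge2_diagonal_isotropic:
  assumes "hom_wedge2 smul \<omega>"
  shows "g (\<omega> x x) z = 0"
proof -
  have "\<omega> x x = - \<omega> x x"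
    using assms unfolding hom_wedge2_def by blast
  then have "g (\<omega> x x) z = - g (\<omega> x x) z"
    by (metis courant_vb_minus_left)
  then show ?thesis by (simp only: real_vector_eq_minus_self_iff)
qed

lemma hom_wedge2_g_skew_left:
  assumes "hom_wedge2 smul \<omega>"
  shows "g (\<omega> x y) z = - g (\<omega> y x) z"
proof -
  have "\<omega> x y = - \<omega> y x"
    using assms unfolding hom_wedge2_def by blast
  then show ?thesis by (simp add: courant_vb_minus_left)
qed

lemma Dop_annihilates:
  assumes "hom_wedge2 smul \<omega>"
    and ker: "\<And>x y h. rho (\<omega> x y) h = 0"
    and skew23: "\<And>x y z. g (\<omega> x y) z = - g (\<omega> x z) y"
  shows "\<omega> (Dop g rho f) e = 0"
proof (rule courant_vb_nondegenerate)
  fix z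
  have "g (\<omega> (Dop g rho f) e) z = - g (\<omega> e (Dop g rho f)) z"
    using assms(1) by (rule hom_wedge2_g_skew_left)
  also have "\<dots> = g (\<omega> e z) (Dop g rho f)"
    by (simp add: skew23[of e z])
  also have "\<dots> = rho (\<omega> e z) f"
    by (simp add: courant_vb_sym[of "\<omega> e z"] courant_vb_Dop)
  also have "\<dots> = 0"
    by (rule ker)
  finally show "g (\<omega> (Dop g rho f) e) z = 0" .
qed

lemma C2_D_iff_ker_skew:
  assumes "hom_wedge2 smul \<omega>"
  shows "C2_D smul g rho \<omega> \<longleftrightarrow>
    (\<forall>x y h. rho (\<omega> x y) h = 0) \<and> (\<forall>x y z. g (\<omega> x y) z = - g (\<omega> x z) y)"
proof
  assume "C2_D smul g rho \<omega>"
  then show "(\<forall>x y h. rho (\<omega> x y) h = 0) \<and> (\<forall>x y z. g (\<omega> x y) z = - g (\<omega> x z) y)"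
    unfolding C2_D_def by blast
next
  assume "(\<forall>x y h. rho (\<omega> x y) h = 0) \<and> (\<forall>x y z. g (\<omega> x y) z = - g (\<omega> x z) y)"
  then have ker: "\<And>x y h. rho (\<omega> x y) h = 0"
    and skew23: "\<And>x y z. g (\<omega> x y) z = - g (\<omega> x z) y"
    by blast+
  show "C2_D smul g rho \<omega>"
    using assms ker skew23 Dop_annihilates[OF assms ker skew23]
      hom_wedge2_g_skew_left[OF assms]
    unfolding C2_D_def hom_wedge2_def by blast
qed

lemma pre_courant_add_iff_anchor_invariance:
  assumes pc: "pre_courant smul g rho circ" and hw: "hom_wedge2 smul \<omega>"
  shows "pre_courant smul g rho (\<lambda>x y. circ x y + \<omega> x y) \<longleftrightarrow>
      (\<forall>x y. rho (circ x y + \<omega> x y) = lie_bracket (rho x) (rho y)) \<and>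
      (\<forall>x y z. rho x (g y z) = g (circ x y + \<omega> x y) z + g y (circ x z + \<omega> x z))"
proof -
  have smul_add: "smul f (a + b) = smul f a + smul f b" for f a b
    using cvb unfolding courant_vb_def module_str_def by meson
  have circ_linear:
    "circ (x + y) z = circ x z + circ y z" "circ x (y + z) = circ x y + circ x z"
    "circ (smul (of_real c) x) y = smul (of_real c) (circ x y)"
    "circ x (smul (of_real c) y) = smul (of_real c) (circ x y)"
    for x y z c
    using pc unfolding pre_courant_def by meson+
  have \<omega>_linear:
    "\<omega> (x + y) z = \<omega> x z + \<omega> y z" "\<omega> x (y + z) = \<omega> x y + \<omega> x z"
    "\<omega> (smul f x) y = smul f (\<omega> x y)" "\<omega> x (smul f y) = smul f (\<omega> x y)"
    for x y z f
    using hw unfolding hom_wedge2_def by meson+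
  have linear:
    "circ (x + y) z + \<omega> (x + y) z = (circ x z + \<omega> x z) + (circ y z + \<omega> y z)"
    "circ x (y + z) + \<omega> x (y + z) = (circ x y + \<omega> x y) + (circ x z + \<omega> x z)"
    "circ (smul (of_real c) x) y + \<omega> (smul (of_real c) x) y = smul (of_real c) (circ x y + \<omega> x y)"
    "circ x (smul (of_real c) y) + \<omega> x (smul (of_real c) y) = smul (of_real c) (circ x y + \<omega> x y)"
    for x y z c
    by (simp_all only: circ_linear \<omega>_linear smul_add add_ac)
  have diagonal: "g (circ x x + \<omega> x x) y = scaleR (1/2) (rho y (g x x))" for x y
  proof -
    have "g (circ x x) y = scaleR (1/2) (rho y (g x x))"
      using pc unfolding pre_courant_def by meson
    then show ?thesis
      by (simp add: courant_vb_add_left hom_wedge2_diagonal_isotropic[OF hw])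
  qed
  show ?thesis
    unfolding pre_courant_def by (simp only: linear diagonal simp_thms)
qed

lemma pre_courant_add_iff_ker_skew:
  assumes pc: "pre_courant smul g rho circ" and hw: "hom_wedge2 smul \<omega>"
  shows "pre_courant smul g rho (\<lambda>x y. circ x y + \<omega> x y) \<longleftrightarrow>
    (\<forall>x y h. rho (\<omega> x y) h = 0) \<and> (\<forall>x y z. g (\<omega> x y) z = - g (\<omega> x z) y)"
proof -
  have anchor_iff: "rho (circ x y + \<omega> x y) = lie_bracket (rho x) (rho y) \<longleftrightarrow>
      (\<forall>h. rho (\<omega> x y) h = 0)" for x y
    using pc unfolding pre_courant_def by (auto simp: courant_vb_anchor_add fun_eq_iff)
  have invariance_iff: "rho x (g y z) = g (circ x y + \<omega> x y) z + g y (circ x z + \<omega> x z) \<longleftrightarrow>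
      g (\<omega> x y) z = - g (\<omega> x z) y" for x y z
  proof -
    have "rho x (g y z) = g (circ x y) z + g y (circ x z)"
      using pc unfolding pre_courant_def by blast
    then show ?thesis
      by (auto simp: courant_vb_add_left courant_vb_add_right courant_vb_sym[of y]
          eq_neg_iff_add_eq_0 algebra_simps)
  qed
  show ?thesis
    unfolding pre_courant_add_iff_anchor_invariance[OF pc hw] anchor_iff invariance_iff
    by blast
qed

end

theorem lemma4p2:
  fixes smul :: "'a::{comm_ring_1,real_algebra_1} \<Rightarrow> 'e::ab_group_add \<Rightarrow> 'e"
    and g :: "'e \<Rightarrow> 'e \<Rightarrow> 'a" and rho :: "'e \<Rightarrow> 'a \<Rightarrow> 'a"
    and circ :: "'e \<Rightarrow> 'e \<Rightarrow> 'e" and \<omega> :: "'e \<Rightarrow> 'e \<Rightarrow> 'e"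
  assumes "courant_vb smul g rho"
    and "pre_courant smul g rho circ"
    and "hom_wedge2 smul \<omega>"
  shows "pre_courant smul g rho (\<lambda>e1 e2. circ e1 e2 + \<omega> e1 e2) \<longleftrightarrow> C2_D smul g rho \<omega>"
  by (simp only: pre_courant_add_iff_ker_skew[OF assms] C2_D_iff_ker_skew[OF assms(1,3)])

end
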